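(* Let $c<2$ and $w_0=(x_0,y_0,z_0)\in\mathbb{R}^3$ with $\kappa(w_0)=c$ and $|z_0|>2$. Then (1) for $w_1=Q_x(w_0)$: $|\tau(w_1)-\tau(w_0)|\ge |y_0z_0|\max\big(|y_0|\sqrt{z_0^2-4},\ 2\sqrt{z_0^2-c-2}\big)$; (2) for $w_1=Q_y(w_0)$: $|\tau(w_1)-\tau(w_0)|\ge |x_0z_0|\max\big(|x_0|\sqrt{z_0^2-4},\ 2\sqrt{z_0^2-c-2}\big)$.
   Context: $\kappa(x,y,z)=-x^2-y^2+z^2+xyz-2$; for $u=(x,y,z)$, $\bar z(u)=-xy-z$ and $\tau(u)=-z\,\bar z(u)$. $Q_x(x,y,z)=(yz-x,y,z)$, $Q_y(x,y,z)=(x,xz-y,z)$. *)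

theory Defs
  imports Complex_Main
begin

fun kappa :: "real \<times> real \<times> real \<Rightarrow> real" where
  "kappa (x, y, z) = - (x ^ 2) - y ^ 2 + z ^ 2 + x * y * z - 2"

fun zbar :: "real \<times> real \<times> real \<Rightarrow> real" where
  "zbar (x, y, z) = - (x * y) - z"

fun tau :: "real \<times> real \<times> real \<Rightarrow> real" where
  "tau (x, y, z) = - z * zbar (x, y, z)"

fun Qx :: "real \<times> real \<times> real \<Rightarrow> real \<times> real \<times> real" where
  "Qx (x, y, z) = (y * z - x, y, z)"

fun Qy :: "real \<times> real \<times> real \<Rightarrow> real \<times> real \<times> real" where
  "Qy (x, y, z) = (x, x * z - y, z)"

end

theory Submission
  imports Defs
begin

text \<open>
  On the level set \<open>\<kappa> = c\<close> the jump of \<open>\<tau>\<close> under \<open>Q\<^sub>x\<close> is \<open>y z (y z - 2 x)\<close>, and the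
  Markov-type equation turns the square of the second factor into the sum of two
  nonnegative terms, \<open>(y z - 2 x)\<^sup>2 = y\<^sup>2 (z\<^sup>2 - 4) + 4 (z\<^sup>2 - c - 2)\<close>; so the factor dominates
  the square root of either term. The statement for \<open>Q\<^sub>y\<close> is the same one with \<open>x\<close> and \<open>y\<close>
  exchanged, since \<open>\<kappa>\<close> and \<open>\<tau>\<close> are symmetric in them.
\<close>

lemma kappa_swap: "kappa (y, x, z) = kappa (x, y, z)"
  by (simp add: algebra_simps)

lemma tau_swap: "tau (y, x, z) = tau (x, y, z)"
  by (simp add: algebra_simps)

lemma tau_Qy_eq_tau_Qx_swap: "tau (Qy (x, y, z)) = tau (Qx (y, x, z))"
  by (simp add: algebra_simps)

lemma tau_Qx_minus_tau: "tau (Qx (x, y, z)) - tau (x, y, z) = y * z * (y * z - 2 * x)"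
  by (simp add: algebra_simps)

lemma square_eq_kappa: "(y * z - 2 * x)^2 = y^2 * (z^2 - 4) + 4 * (z^2 - kappa (x, y, z) - 2)"
  by (simp add: power2_eq_square algebra_simps)

lemma max_sqrt_le_sqrt_add:
  fixes a b :: real
  assumes "0 \<le> a" and "0 \<le> b"
  shows "max (sqrt a) (sqrt b) \<le> sqrt (a + b)"
  using assms by simp

lemma tau_Qx_jump_lower_bound:
  fixes c x y z :: real
  assumes "kappa (x, y, z) = c" and "4 \<le> z^2" and "c + 2 \<le> z^2"
  shows "\<bar>y * z\<bar> * max (\<bar>y\<bar> * sqrt (z^2 - 4)) (2 * sqrt (z^2 - c - 2))
           \<le> \<bar>tau (Qx (x, y, z)) - tau (x, y, z)\<bar>"
proof -
  let ?a = "y^2 * (z^2 - 4)" and ?b = "4 * (z^2 - c - 2)"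
  have "max (\<bar>y\<bar> * sqrt (z^2 - 4)) (2 * sqrt (z^2 - c - 2)) = max (sqrt ?a) (sqrt ?b)"
    by (simp only: real_sqrt_mult real_sqrt_abs real_sqrt_four)
  also have "\<dots> \<le> sqrt (?a + ?b)"
    using assms(2,3) by (intro max_sqrt_le_sqrt_add) auto
  also have "\<dots> = \<bar>y * z - 2 * x\<bar>"
    by (simp only: square_eq_kappa [of y z x, unfolded assms(1), symmetric] real_sqrt_abs)
  finally have "\<bar>y * z\<bar> * max (\<bar>y\<bar> * sqrt (z^2 - 4)) (2 * sqrt (z^2 - c - 2))
                 \<le> \<bar>y * z\<bar> * \<bar>y * z - 2 * x\<bar>"
    by (rule mult_left_mono) simp
  also have "\<dots> = \<bar>tau (Qx (x, y, z)) - tau (x, y, z)\<bar>"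
    by (simp only: tau_Qx_minus_tau abs_mult)
  finally show ?thesis .
qed

theorem mainTheorem9:
  fixes c x0 y0 z0 :: real
  assumes "c < 2"
    and "kappa (x0, y0, z0) = c"
    and "\<bar>z0\<bar> > 2"
  shows "\<bar>tau (Qx (x0, y0, z0)) - tau (x0, y0, z0)\<bar>
           \<ge> \<bar>y0 * z0\<bar> * max (\<bar>y0\<bar> * sqrt (z0^2 - 4)) (2 * sqrt (z0^2 - c - 2))
         \<and> \<bar>tau (Qy (x0, y0, z0)) - tau (x0, y0, z0)\<bar>
           \<ge> \<bar>x0 * z0\<bar> * max (\<bar>x0\<bar> * sqrt (z0^2 - 4)) (2 * sqrt (z0^2 - c - 2))"
proof -
  have "2^2 < \<bar>z0\<bar>^2"
    using assms(3) by (intro power_strict_mono) auto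
  then have z: "4 \<le> z0^2" and c: "c + 2 \<le> z0^2"
    using assms(1) by auto
  have "kappa (y0, x0, z0) = c"
    using assms(2) by (simp only: kappa_swap)
  from tau_Qx_jump_lower_bound [OF this z c]
  have "\<bar>x0 * z0\<bar> * max (\<bar>x0\<bar> * sqrt (z0^2 - 4)) (2 * sqrt (z0^2 - c - 2))
          \<le> \<bar>tau (Qy (x0, y0, z0)) - tau (x0, y0, z0)\<bar>"
    by (simp only: tau_Qy_eq_tau_Qx_swap tau_swap [of y0 x0])
  with tau_Qx_jump_lower_bound [OF assms(2) z c] show ?thesis
    by simp
qed

end
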